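(* Let $P$ be a finite poset, $\mathfrak{m}=(x_p)_{p\in P}\subseteq k[x_P]$ and $d\ge2$. Then $\mathfrak{m}^d$ is $P$-stable if and only if $P$ is a disjoint union of posets whose Hasse diagrams are rooted trees with the roots on top.
   Context: $k$ is a field and $k[x_P]$ the polynomial ring in variables $x_p$, $p\in P$. A rooted tree with the root on top means a connected poset whose Hasse diagram is a tree and which has a unique maximal element (the root). For $b\in P$, a $b$-chain is a multichain $C: p_1\le\dots\le p_r$ with $p_r\le b$; its length is $r$ and $m_C=\prod x_{p_i}$; $C$ is in a monomial $m$ if $m_C\mid m$; it is a longest $b$-chain in $m$ if no $b$-chain in $m$ is longer; it goes through $a$ if $a\le b$ and $a$ is comparable to every $p_i$. For an antichain $B$, $m_B=\prod_{b\in B}x_b$. A monomial ideal $I$ is $P$-stable if whenever $m=n\,m_B\in I$ ($n$ a monomial, $B$ an antichain) and $a\in P$ is such that for each $b\in B$ some longest $b$-chain in $m$ goes through $a$, then $n\,x_a\in I$. *)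

theory Defs
  imports "HOL-Library.Multiset"
begin

text \<open>Monomials of k[x_P] are represented by multisets over P (exponent vectors);
  the product of monomials is multiset sum, divisibility is sub-multiset.
  A monomial ideal is represented by the set of monomials it contains.\<close>

definition monomial_on :: "'a set \<Rightarrow> 'a multiset \<Rightarrow> bool" where
  "monomial_on P m \<longleftrightarrow> set_mset m \<subseteq> P"

text \<open>The monomials of the ideal m^d, where m = (x_p)_{p in P}: monomials of degree at least d.\<close>
definition max_ideal_pow :: "'a set \<Rightarrow> nat \<Rightarrow> 'a multiset set" where
  "max_ideal_pow P d = {m. monomial_on P m \<and> size m \<ge> d}"

definition antichain_on :: "'a::order set \<Rightarrow> 'a set \<Rightarrow> bool" where
  "antichain_on P B \<longleftrightarrow> B \<subseteq> P \<and> (\<forall>x\<in>B. \<forall>y\<in>B. x \<le> y \<longrightarrow> x = y)"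

definition b_chain :: "'a::order set \<Rightarrow> 'a \<Rightarrow> 'a list \<Rightarrow> bool" where
  "b_chain P b C \<longleftrightarrow> set C \<subseteq> P \<and> sorted_wrt (\<le>) C \<and> (C \<noteq> [] \<longrightarrow> last C \<le> b)"

definition chain_in :: "'a list \<Rightarrow> 'a multiset \<Rightarrow> bool" where
  "chain_in C m \<longleftrightarrow> mset C \<subseteq># m"

definition longest_b_chain_in :: "'a::order set \<Rightarrow> 'a \<Rightarrow> 'a list \<Rightarrow> 'a multiset \<Rightarrow> bool" where
  "longest_b_chain_in P b C m \<longleftrightarrow> b_chain P b C \<and> chain_in C m \<and>
     (\<forall>C'. b_chain P b C' \<and> chain_in C' m \<longrightarrow> length C' \<le> length C)"

definition goes_through :: "'a::order \<Rightarrow> 'a \<Rightarrow> 'a list \<Rightarrow> bool" where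
  "goes_through a b C \<longleftrightarrow> a \<le> b \<and> (\<forall>p\<in>set C. a \<le> p \<or> p \<le> a)"

definition P_stable :: "'a::order set \<Rightarrow> 'a multiset set \<Rightarrow> bool" where
  "P_stable P I \<longleftrightarrow>
     (\<forall>m n B a. m \<in> I \<and> monomial_on P n \<and> antichain_on P B \<and> m = n + mset_set B \<and> a \<in> P \<and>
        (\<forall>b\<in>B. \<exists>C. longest_b_chain_in P b C m \<and> goes_through a b C)
        \<longrightarrow> n + {#a#} \<in> I)"

definition covers_in :: "'a::order set \<Rightarrow> 'a \<Rightarrow> 'a \<Rightarrow> bool" where
  "covers_in S p q \<longleftrightarrow> p \<in> S \<and> q \<in> S \<and> p < q \<and> \<not> (\<exists>r\<in>S. p < r \<and> r < q)"

definition hasse_adj :: "'a::order set \<Rightarrow> 'a \<Rightarrow> 'a \<Rightarrow> bool" where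
  "hasse_adj S p q \<longleftrightarrow> covers_in S p q \<or> covers_in S q p"

definition hasse_walk :: "'a::order set \<Rightarrow> 'a list \<Rightarrow> bool" where
  "hasse_walk S vs \<longleftrightarrow> vs \<noteq> [] \<and> set vs \<subseteq> S \<and>
     (\<forall>i. Suc i < length vs \<longrightarrow> hasse_adj S (vs ! i) (vs ! Suc i))"

definition hasse_is_tree :: "'a::order set \<Rightarrow> bool" where
  "hasse_is_tree S \<longleftrightarrow> S \<noteq> {} \<and>
     (\<forall>p\<in>S. \<forall>q\<in>S. \<exists>vs. hasse_walk S vs \<and> hd vs = p \<and> last vs = q) \<and>
     \<not> (\<exists>vs. hasse_walk S vs \<and> distinct vs \<and> length vs \<ge> 3 \<and> hasse_adj S (last vs) (hd vs))"

definition connected_poset :: "'a::order set \<Rightarrow> bool" where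
  "connected_poset S \<longleftrightarrow> S \<noteq> {} \<and>
     (\<forall>p\<in>S. \<forall>q\<in>S. \<exists>vs. vs \<noteq> [] \<and> set vs \<subseteq> S \<and> hd vs = p \<and> last vs = q \<and>
        (\<forall>i. Suc i < length vs \<longrightarrow> (vs ! i \<le> vs ! Suc i \<or> vs ! Suc i \<le> vs ! i)))"

definition rooted_tree_root_top :: "'a::order set \<Rightarrow> bool" where
  "rooted_tree_root_top S \<longleftrightarrow> connected_poset S \<and> hasse_is_tree S \<and>
     (\<exists>!r. r \<in> S \<and> (\<forall>q\<in>S. \<not> r < q))"

definition disjoint_union_rooted_trees :: "'a::order set \<Rightarrow> bool" where
  "disjoint_union_rooted_trees P \<longleftrightarrow>
     (\<exists>Q. \<Union>Q = P \<and> (\<forall>S\<in>Q. \<forall>T\<in>Q. S \<noteq> T \<longrightarrow> S \<inter> T = {}) \<and>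
          (\<forall>S\<in>Q. \<forall>T\<in>Q. S \<noteq> T \<longrightarrow> (\<forall>x\<in>S. \<forall>y\<in>T. \<not> x \<le> y)) \<and>
          (\<forall>S\<in>Q. rooted_tree_root_top S))"

end

(* Both sides are equivalent to: above every element of P the elements form a chain.

   If so, an antichain B whose elements all lie above some a has at most one element,
   so replacing m_B by x_a never lowers the degree and m^d is P-stable. If not, say
   a <= b1, b2 with b1, b2 incomparable, then m = x_b1^(d-1) x_b2 with B = {b1, b2}
   violates stability.

   On the order side, such a finite poset splits into the down-sets of its maximal
   elements, and each Hasse diagram is a tree because the minimal vertex of a cycle
   would be covered by both of its neighbours. Conversely, in a rooted tree two
   incomparable elements above a common lower bound produce a Hasse cycle through a
   maximal common lower bound, two of its upper covers and a minimal common upper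
   bound of these. *)

theory Submission
  imports Defs
begin

definition up_linear :: "'a::order set \<Rightarrow> bool" where
  "up_linear P \<longleftrightarrow> (\<forall>a\<in>P. \<forall>b1\<in>P. \<forall>b2\<in>P. a \<le> b1 \<longrightarrow> a \<le> b2 \<longrightarrow> b1 \<le> b2 \<or> b2 \<le> b1)"

definition hasse_cycle :: "'a::order set \<Rightarrow> 'a list \<Rightarrow> bool" where
  "hasse_cycle S vs \<longleftrightarrow>
     hasse_walk S vs \<and> distinct vs \<and> 3 \<le> length vs \<and> hasse_adj S (last vs) (hd vs)"

lemma hasse_is_tree_iff:
  "hasse_is_tree S \<longleftrightarrow> S \<noteq> {} \<and>
     (\<forall>p\<in>S. \<forall>q\<in>S. \<exists>vs. hasse_walk S vs \<and> hd vs = p \<and> last vs = q) \<and> (\<nexists>vs. hasse_cycle S vs)"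
  unfolding hasse_is_tree_def hasse_cycle_def by blast

lemma hasse_walk_iff:
  "hasse_walk S vs \<longleftrightarrow> vs \<noteq> [] \<and> set vs \<subseteq> S \<and> successively (hasse_adj S) vs"
  unfolding hasse_walk_def successively_conv_nth by blast

lemma hasse_adj_commute: "hasse_adj S x y \<longleftrightarrow> hasse_adj S y x"
  unfolding hasse_adj_def by blast

lemma hasse_walk_rev: "hasse_walk S vs \<Longrightarrow> hasse_walk S (rev vs)"
  unfolding hasse_walk_iff by (simp add: hasse_adj_commute)

lemma hasse_walk_join:
  assumes "hasse_walk S xs" "hasse_walk S ys" "last xs = hd ys"
  shows "hasse_walk S (xs @ tl ys) \<and> hd (xs @ tl ys) = hd xs \<and> last (xs @ tl ys) = last ys"
proof -
  from assms(2) obtain y ys' where ys: "ys = y # ys'"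
    unfolding hasse_walk_iff by (cases ys) auto
  show ?thesis
    using assms unfolding hasse_walk_iff ys
    by (auto simp: successively_append_iff successively_Cons)
qed

lemma exists_cover_below:
  fixes S :: "'a::order set"
  assumes "finite S" "p \<in> S" "q \<in> S" "p < q"
  obtains c where "covers_in S p c" "c \<le> q"
proof -
  define A where "A = {x\<in>S. p < x \<and> x \<le> q}"
  obtain c where c: "c \<in> A" "\<forall>x\<in>A. x \<le> c \<longrightarrow> c = x"
    using finite_has_minimal2[of A q] assms unfolding A_def by auto
  have "covers_in S p c"
    using c assms(2) unfolding covers_in_def A_def by (force dest: less_imp_le)
  with c that show thesis unfolding A_def by blast
qed

lemma covering_walk:
  fixes S :: "'a::order set"
  assumes "finite S" "p \<in> S" "q \<in> S" "p \<le> q"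
  shows "\<exists>vs. hasse_walk S vs \<and> hd vs = p \<and> last vs = q \<and> distinct vs \<and>
           set vs \<subseteq> {x\<in>S. p \<le> x \<and> x \<le> q}"
  using assms(2-4)
proof (induction "card {x\<in>S. p \<le> x \<and> x \<le> q}" arbitrary: p rule: less_induct)
  case less
  show ?case
  proof (cases "p = q")
    case True
    then show ?thesis using less.prems by (intro exI[of _ "[p]"]) (auto simp: hasse_walk_def)
  next
    case False
    then obtain c where c: "covers_in S p c" "c \<le> q"
      using exists_cover_below[OF assms(1) less.prems(1,2)] less.prems(3) by (auto simp: less_le)
    then have cS: "c \<in> S" and pc: "p < c" unfolding covers_in_def by auto
    have "{x\<in>S. c \<le> x \<and> x \<le> q} \<subset> {x\<in>S. p \<le> x \<and> x \<le> q}"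
      using pc less.prems by (auto dest: order.strict_trans2)
    then have "card {x\<in>S. c \<le> x \<and> x \<le> q} < card {x\<in>S. p \<le> x \<and> x \<le> q}"
      using assms(1) by (intro psubset_card_mono) auto
    then obtain vs where vs: "hasse_walk S vs" "hd vs = c" "last vs = q" "distinct vs"
      "set vs \<subseteq> {x\<in>S. c \<le> x \<and> x \<le> q}"
      using less.hyps cS less.prems(2) c(2) by blast
    then have "hasse_walk S (p # vs)"
      using c less.prems(1) unfolding hasse_walk_iff hasse_adj_def
      by (cases vs) (auto simp: successively_Cons)
    moreover have "distinct (p # vs)" and "set (p # vs) \<subseteq> {x\<in>S. p \<le> x \<and> x \<le> q}"
      using vs pc less.prems by (auto dest: order.strict_trans2)
    ultimately show ?thesis using vs by (intro exI[of _ "p # vs"]) (auto simp: hasse_walk_def)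
  qed
qed

lemma hasse_walk_via_top:
  fixes S :: "'a::order set"
  assumes "finite S" "r \<in> S" "\<forall>x\<in>S. x \<le> r" "p \<in> S" "q \<in> S"
  shows "\<exists>vs. hasse_walk S vs \<and> hd vs = p \<and> last vs = q"
proof -
  obtain xs where xs: "hasse_walk S xs" "hd xs = p" "last xs = r"
    using covering_walk[OF assms(1,4,2)] assms(3,4) by blast
  obtain ys where ys: "hasse_walk S ys" "hd ys = q" "last ys = r"
    using covering_walk[OF assms(1,5,2)] assms(3,5) by blast
  have "hasse_walk S (rev ys)" "hd (rev ys) = r" "last (rev ys) = q"
    using hasse_walk_rev[OF ys(1)] ys unfolding hasse_walk_iff by (auto simp: hd_rev last_rev)
  then show ?thesis
    using hasse_walk_join[OF xs(1), of "rev ys"] xs by (intro exI[of _ "xs @ tl (rev ys)"]) auto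
qed

lemma hasse_cycle_rotate1: "hasse_cycle S vs \<Longrightarrow> hasse_cycle S (rotate1 vs)"
proof -
  assume cyc: "hasse_cycle S vs"
  then obtain v ws where vs: "vs = v # ws" "ws \<noteq> []"
    unfolding hasse_cycle_def by (cases vs; cases "tl vs") auto
  then show ?thesis
    using cyc unfolding hasse_cycle_def hasse_walk_iff
    by (auto simp: successively_append_iff successively_Cons hasse_adj_commute)
qed

lemma hasse_cycle_rotate: "hasse_cycle S vs \<Longrightarrow> hasse_cycle S (rotate n vs)"
  by (induction n) (simp_all add: hasse_cycle_rotate1)

lemma up_linear_no_hasse_cycle:
  assumes "up_linear S" "hasse_cycle S vs"
  shows False
proof -
  have len: "3 \<le> length vs" using assms(2) unfolding hasse_cycle_def by blast
  obtain v where v: "v \<in> set vs" "\<forall>x\<in>set vs. x \<le> v \<longrightarrow> v = x"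
    using finite_has_minimal[of "set vs"] len by force
  then obtain i where i: "i < length vs" "vs ! i = v" by (auto simp: in_set_conv_nth)
  \<comment> \<open>Rotate the cycle so that its minimal vertex sits between ws ! 0 and ws ! 2;
    both neighbours then cover it, contradicting linearity above it.\<close>
  define ws where "ws = rotate (i + length vs - 1) vs"
  have cyc: "hasse_cycle S ws" using hasse_cycle_rotate[OF assms(2)] unfolding ws_def .
  have set_ws: "set ws = set vs" and len_ws: "length ws = length vs" unfolding ws_def by simp_all
  have "ws ! 1 = v"
  proof -
    have "i + length vs - 1 + 1 = i + length vs" using len by simp
    then have "(i + length vs - 1 + 1) mod length vs = i" using i by simp
    then show ?thesis using i len unfolding ws_def by (simp add: nth_rotate)
  qed
  have step: "hasse_adj S (ws ! j) (ws ! Suc j)" if "Suc j < length ws" for j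
    using cyc that unfolding hasse_cycle_def hasse_walk_def by blast
  have adj: "hasse_adj S (ws ! 0) v" "hasse_adj S v (ws ! 2)"
    using step[of 0] step[of 1] len len_ws \<open>ws ! 1 = v\<close> by (simp_all add: numeral_2_eq_2)
  have "distinct ws" using cyc unfolding hasse_cycle_def by blast
  then have neighbours: "ws ! 0 \<noteq> v" "ws ! 2 \<noteq> v" "ws ! 0 \<noteq> ws ! 2"
    using nth_eq_iff_index_eq[of ws] len len_ws \<open>ws ! 1 = v\<close> by force+
  have "ws ! 0 \<in> set vs" "ws ! 2 \<in> set vs"
    unfolding set_ws[symmetric] using len len_ws by (auto intro!: nth_mem)
  have "covers_in S v (ws ! 0)" "covers_in S v (ws ! 2)"
    using adj v(2) neighbours \<open>ws ! 0 \<in> set vs\<close> \<open>ws ! 2 \<in> set vs\<close>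
    unfolding hasse_adj_def covers_in_def by auto
  moreover have "ws ! 0 \<le> ws ! 2 \<or> ws ! 2 \<le> ws ! 0"
    using assms(1) calculation unfolding up_linear_def covers_in_def by (meson less_imp_le)
  ultimately show False
    using neighbours unfolding covers_in_def by (auto simp: order.order_iff_strict)
qed

lemma hasse_cycle_Cons:
  assumes "hasse_walk S ws" "distinct ws" "z \<notin> set ws" "hd ws \<noteq> last ws"
    and "hasse_adj S z (hd ws)" "hasse_adj S (last ws) z"
  shows "hasse_cycle S (z # ws)"
proof -
  obtain v vs where ws: "ws = v # vs" "vs \<noteq> []"
    using assms(1,4) unfolding hasse_walk_def by (cases ws; cases "tl ws") auto
  have "z \<in> S" using assms(5) unfolding hasse_adj_def covers_in_def by blast
  then show ?thesis
    using assms ws(2) unfolding hasse_cycle_def hasse_walk_iff ws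
    by (auto simp: successively_Cons Suc_le_eq)
qed

lemma hasse_cycle_of_two_covers:
  fixes S :: "'a::order set"
  assumes fin: "finite S" and c1: "covers_in S z c1" and c2: "covers_in S z c2" and "c1 \<noteq> c2"
    and r: "r \<in> S" "c1 \<le> r" "c2 \<le> r"
  shows "\<exists>vs. hasse_cycle S vs"
proof -
  \<comment> \<open>Walk up from c1 and from c2 to a minimal common upper bound w: by minimality
    the two walks meet only in w, and closing them through z gives the cycle.\<close>
  define U where "U = {x\<in>S. c1 \<le> x \<and> c2 \<le> x}"
  obtain w where w: "w \<in> U" "\<forall>y\<in>U. y \<le> w \<longrightarrow> w = y"
    using finite_has_minimal2[of U r] fin r unfolding U_def by auto
  have wS: "w \<in> S" "c1 \<le> w" "c2 \<le> w" and zc: "z < c1" "z < c2" "c1 \<in> S" "c2 \<in> S"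
    using w c1 c2 unfolding U_def covers_in_def by auto
  obtain ch1 where ch1: "hasse_walk S ch1" "hd ch1 = c1" "last ch1 = w" "distinct ch1"
    "set ch1 \<subseteq> {x\<in>S. c1 \<le> x \<and> x \<le> w}"
    using covering_walk[OF fin zc(3) wS(1,2)] by blast
  obtain ch2 where ch2: "hasse_walk S ch2" "hd ch2 = c2" "last ch2 = w" "distinct ch2"
    "set ch2 \<subseteq> {x\<in>S. c2 \<le> x \<and> x \<le> w}"
    using covering_walk[OF fin zc(4) wS(1,3)] by blast
  obtain rest where rev_ch2: "rev ch2 = w # rest"
    using ch2(1,3) unfolding hasse_walk_def by (cases "rev ch2") (auto simp: last_rev[symmetric])
  have "distinct (w # rest)" "set (w # rest) = set ch2"
    using ch2(4) arg_cong[OF rev_ch2, of distinct] arg_cong[OF rev_ch2, of set] by simp_all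
  then have rest: "distinct rest" "w \<notin> set rest" "set rest \<subseteq> {x\<in>S. c2 \<le> x \<and> x \<le> w}"
    using ch2(5) by auto
  have "hd (rev ch2) = w" "last (rev ch2) = c2" using ch2(2,3) by (simp_all add: hd_rev last_rev)
  then have joined: "hasse_walk S (ch1 @ rest)" "hd (ch1 @ rest) = c1" "last (ch1 @ rest) = c2"
    using hasse_walk_join[OF ch1(1) hasse_walk_rev[OF ch2(1)]] ch1(2,3) unfolding rev_ch2 by simp_all
  have "distinct (ch1 @ rest)"
  proof -
    have "set ch1 \<inter> set rest = {}"
      using w rest ch1(5) unfolding U_def by fastforce
    then show ?thesis using ch1(4) rest(1) by simp
  qed
  moreover have "z \<notin> set (ch1 @ rest)"
    using ch1(5) rest(3) zc by (auto dest: leD)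
  moreover have "hasse_adj S z (hd (ch1 @ rest))" "hasse_adj S (last (ch1 @ rest)) z"
    using joined c1 c2 unfolding hasse_adj_def by auto
  ultimately show ?thesis
    using hasse_cycle_Cons[OF joined(1)] joined(2,3) \<open>c1 \<noteq> c2\<close> by blast
qed

lemma unique_maximal_greatest:
  fixes S :: "'a::order set"
  assumes "finite S" and "\<exists>!r. r \<in> S \<and> (\<forall>q\<in>S. \<not> r < q)"
  obtains r where "r \<in> S" "\<forall>x\<in>S. x \<le> r"
proof -
  obtain r where r: "r \<in> S" "\<And>r'. r' \<in> S \<Longrightarrow> \<forall>q\<in>S. \<not> r' < q \<Longrightarrow> r' = r"
    using assms(2) by blast
  have "x \<le> r" if "x \<in> S" for x
  proof -
    obtain m where "m \<in> S" "x \<le> m" "\<forall>q\<in>S. m \<le> q \<longrightarrow> m = q"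
      using finite_has_maximal2[OF assms(1) \<open>x \<in> S\<close>] by blast
    then show ?thesis using r(2)[of m] by (auto simp: less_le)
  qed
  with r(1) that show thesis by blast
qed

lemma rooted_tree_imp_up_linear:
  fixes S :: "'a::order set"
  assumes fin: "finite S" and tree: "rooted_tree_root_top S"
  shows "up_linear S"
  unfolding up_linear_def
proof (intro ballI impI, rule ccontr)
  fix a b1 b2 assume ab: "a \<in> S" "b1 \<in> S" "b2 \<in> S" "a \<le> b1" "a \<le> b2"
    and incomparable: "\<not> (b1 \<le> b2 \<or> b2 \<le> b1)"
  obtain r where r: "r \<in> S" "\<forall>x\<in>S. x \<le> r"
    using unique_maximal_greatest[OF fin] tree unfolding rooted_tree_root_top_def by blast
  define Z where "Z = {x\<in>S. x \<le> b1 \<and> x \<le> b2}"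
  obtain z where z: "z \<in> Z" "\<forall>x\<in>Z. z \<le> x \<longrightarrow> z = x"
    using finite_has_maximal2[of Z a] fin ab unfolding Z_def by auto
  then have "z \<in> S" "z < b1" "z < b2"
    using incomparable unfolding Z_def by (auto simp: less_le)
  then obtain c1 c2 where c1: "covers_in S z c1" "c1 \<le> b1" and c2: "covers_in S z c2" "c2 \<le> b2"
    using exists_cover_below[OF fin] ab(2,3) by metis
  have "c1 \<noteq> c2"
  proof
    assume "c1 = c2"
    then have "c1 \<in> Z" using c1 c2 unfolding Z_def covers_in_def by auto
    then show False using z(2) c1(1) unfolding covers_in_def by auto
  qed
  then obtain vs where "hasse_cycle S vs"
    using hasse_cycle_of_two_covers[OF fin c1(1) c2(1) _ r(1)] r(2) c1(1) c2(1)
    unfolding covers_in_def by blast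
  then show False using tree unfolding rooted_tree_root_top_def hasse_is_tree_iff by blast
qed

lemma up_linear_with_top_rooted_tree:
  fixes S :: "'a::order set"
  assumes fin: "finite S" and lin: "up_linear S" and r: "r \<in> S" "\<forall>x\<in>S. x \<le> r"
  shows "rooted_tree_root_top S"
proof -
  have "connected_poset S"
    unfolding connected_poset_def
  proof (intro conjI ballI)
    fix p q assume pq: "p \<in> S" "q \<in> S"
    have "\<forall>i. Suc i < 3 \<longrightarrow> [p, r, q] ! i \<le> [p, r, q] ! Suc i \<or> [p, r, q] ! Suc i \<le> [p, r, q] ! i"
      using r pq by (auto simp: less_Suc_eq numeral_eq_Suc)
    then show "\<exists>vs. vs \<noteq> [] \<and> set vs \<subseteq> S \<and> hd vs = p \<and> last vs = q \<and>
        (\<forall>i. Suc i < length vs \<longrightarrow> vs ! i \<le> vs ! Suc i \<or> vs ! Suc i \<le> vs ! i)"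
      using r pq by (intro exI[of _ "[p, r, q]"]) auto
  qed (use r in auto)
  moreover have "hasse_is_tree S"
    unfolding hasse_is_tree_iff
    using r hasse_walk_via_top[OF fin r] up_linear_no_hasse_cycle[OF lin] by blast
  moreover have "\<exists>!r. r \<in> S \<and> (\<forall>q\<in>S. \<not> r < q)"
    using r by (metis leD order.order_iff_strict)
  ultimately show ?thesis unfolding rooted_tree_root_top_def by blast
qed

lemma up_linear_subset: "up_linear P \<Longrightarrow> S \<subseteq> P \<Longrightarrow> up_linear S"
  unfolding up_linear_def by blast

lemma up_linear_imp_forest:
  fixes P :: "'a::order set"
  assumes fin: "finite P" and lin: "up_linear P"
  shows "disjoint_union_rooted_trees P"
proof -
  define R where "R = {r\<in>P. \<forall>q\<in>P. \<not> r < q}"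
  define Q where "Q = (\<lambda>r. {p\<in>P. p \<le> r}) ` R"
  have "\<exists>r\<in>R. p \<le> r" if p: "p \<in> P" for p
  proof -
    obtain m where "m \<in> P" "p \<le> m" "\<forall>q\<in>P. m \<le> q \<longrightarrow> m = q"
      using finite_has_maximal2[OF fin p] by blast
    then show ?thesis unfolding R_def by (auto simp: less_le)
  qed
  then have "\<Union>Q = P" unfolding Q_def by auto
  moreover have incomparable: "\<forall>S\<in>Q. \<forall>T\<in>Q. S \<noteq> T \<longrightarrow> (\<forall>x\<in>S. \<forall>y\<in>T. \<not> x \<le> y)"
  proof (intro ballI impI notI)
    fix S T x y assume "S \<in> Q" "T \<in> Q" "S \<noteq> T" "x \<in> S" "y \<in> T" "x \<le> y"
    obtain r1 r2 where r: "r1 \<in> R" "r2 \<in> R" "S = {p\<in>P. p \<le> r1}" "T = {p\<in>P. p \<le> r2}"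
      using \<open>S \<in> Q\<close> \<open>T \<in> Q\<close> unfolding Q_def by blast
    have "x \<in> P" "x \<le> r1" "x \<le> r2"
      using r(3,4) \<open>x \<in> S\<close> \<open>y \<in> T\<close> \<open>x \<le> y\<close> by (auto intro: order.trans)
    then have "r1 \<le> r2 \<or> r2 \<le> r1" using lin r(1,2) unfolding up_linear_def R_def by blast
    moreover have "r1 \<noteq> r2" using r(3,4) \<open>S \<noteq> T\<close> by blast
    ultimately show False using r(1,2) unfolding R_def by (auto simp: less_le)
  qed
  moreover have "\<forall>S\<in>Q. \<forall>T\<in>Q. S \<noteq> T \<longrightarrow> S \<inter> T = {}"
  proof (intro ballI impI)
    fix S T assume "S \<in> Q" "T \<in> Q" "S \<noteq> T"
    then have "\<forall>x\<in>S. \<forall>y\<in>T. \<not> x \<le> y" using incomparable by blast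
    then show "S \<inter> T = {}" by auto
  qed
  moreover have "\<forall>S\<in>Q. rooted_tree_root_top S"
  proof
    fix S assume "S \<in> Q"
    then obtain r where r: "r \<in> R" "S = {p\<in>P. p \<le> r}" unfolding Q_def by blast
    then have "finite S" "up_linear S" "r \<in> S" "\<forall>x\<in>S. x \<le> r"
      using fin up_linear_subset[OF lin] unfolding R_def by auto
    then show "rooted_tree_root_top S" by (rule up_linear_with_top_rooted_tree)
  qed
  ultimately show ?thesis unfolding disjoint_union_rooted_trees_def by (intro exI[of _ Q] conjI)
qed

lemma forest_imp_up_linear:
  fixes P :: "'a::order set"
  assumes fin: "finite P" and "disjoint_union_rooted_trees P"
  shows "up_linear P"
  unfolding up_linear_def
proof (intro ballI impI)
  obtain Q where Q: "\<Union>Q = P" "\<forall>S\<in>Q. \<forall>T\<in>Q. S \<noteq> T \<longrightarrow> (\<forall>x\<in>S. \<forall>y\<in>T. \<not> x \<le> y)"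
    "\<forall>S\<in>Q. rooted_tree_root_top S"
    using assms(2) unfolding disjoint_union_rooted_trees_def by (elim exE conjE) (rule that; assumption)
  fix a b1 b2 assume ab: "a \<in> P" "b1 \<in> P" "b2 \<in> P" "a \<le> b1" "a \<le> b2"
  obtain S where S: "S \<in> Q" "a \<in> S" using Q(1) ab(1) by blast
  have same_block: "b \<in> S" if "b \<in> P" "a \<le> b" for b
  proof -
    obtain T where "T \<in> Q" "b \<in> T" using Q(1) \<open>b \<in> P\<close> by blast
    then show ?thesis using Q(2) S \<open>a \<le> b\<close> by blast
  qed
  have "S \<subseteq> P" using S(1) Q(1) by blast
  then have "up_linear S"
    using rooted_tree_imp_up_linear[OF finite_subset[OF _ fin]] Q(3) S(1) by blast
  then show "b1 \<le> b2 \<or> b2 \<le> b1"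
    using S(2) same_block[OF ab(2,4)] same_block[OF ab(3,5)] ab(4,5) unfolding up_linear_def by blast
qed

lemma b_chain_le:
  assumes "b_chain P b C" "x \<in> set C"
  shows "x \<le> b"
proof -
  have "C \<noteq> []" "sorted_wrt (\<le>) C" "last C \<le> b"
    using assms unfolding b_chain_def by auto
  then have "sorted_wrt (\<le>) (butlast C @ [last C])" "x \<in> set (butlast C @ [last C])"
    using assms(2) by simp_all
  then have "x \<le> last C" unfolding sorted_wrt_append by auto
  then show ?thesis using \<open>last C \<le> b\<close> by (rule order.trans)
qed

lemma longest_b_chain_replicate:
  fixes m :: "'a::order multiset"
  assumes "b \<in> P" and only_b: "\<forall>x\<in>#m. x \<le> b \<longrightarrow> x = b"
  shows "longest_b_chain_in P b (replicate (count m b) b) m"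
  unfolding longest_b_chain_in_def
proof (intro conjI allI impI)
  show "b_chain P b (replicate (count m b) b)"
    using assms(1) unfolding b_chain_def by (auto simp: sorted_wrt_iff_nth_less)
  show "chain_in (replicate (count m b) b) m"
    unfolding chain_in_def by (metis count_le_replicate_mset_subset_eq mset_replicate order_refl)
  fix C assume C: "b_chain P b C \<and> chain_in C m"
  have "x = b" if "x \<in> set C" for x
    using only_b b_chain_le[of P b C x] C that unfolding chain_in_def
    by (meson mset_subset_eqD in_multiset_in_set)
  then have "mset C = replicate_mset (length C) b"
    by (metis mset_replicate replicate_length_same)
  then show "length C \<le> length (replicate (count m b) b)"
    using C unfolding chain_in_def by (simp add: count_le_replicate_mset_subset_eq)
qed

lemma P_stable_max_ideal_pow_imp_up_linear:
  fixes P :: "'a::order set"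
  assumes stable: "P_stable P (max_ideal_pow P d)" and "2 \<le> d"
  shows "up_linear P"
  unfolding up_linear_def
proof (intro ballI impI, rule ccontr)
  fix a b1 b2 assume ab: "a \<in> P" "b1 \<in> P" "b2 \<in> P" "a \<le> b1" "a \<le> b2"
    and incomparable: "\<not> (b1 \<le> b2 \<or> b2 \<le> b1)"
  \<comment> \<open>In m = b1^(d-1) b2 the longest b-chains for b in {b1, b2} are powers of b, which go
    through a; yet trading m_B = b1 b2 for a drops the degree to d - 1.\<close>
  define n where "n = replicate_mset (d - 2) b1"
  define m where "m = n + {#b1, b2#}"
  have "b1 \<noteq> b2" using incomparable by auto
  then have split: "m = n + mset_set {b1, b2}" unfolding m_def by simp
  have "m \<in> max_ideal_pow P d" "monomial_on P n"
    using ab \<open>2 \<le> d\<close> unfolding m_def n_def max_ideal_pow_def monomial_on_def by auto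
  moreover have "antichain_on P {b1, b2}"
    using ab incomparable unfolding antichain_on_def by auto
  moreover have "\<forall>b\<in>{b1, b2}. \<exists>C. longest_b_chain_in P b C m \<and> goes_through a b C"
  proof
    fix b assume b: "b \<in> {b1, b2}"
    then have "\<forall>x\<in>#m. x \<le> b \<longrightarrow> x = b"
      using incomparable unfolding m_def n_def by (auto split: if_splits)
    then have "longest_b_chain_in P b (replicate (count m b) b) m"
      using b ab by (intro longest_b_chain_replicate) auto
    moreover have "goes_through a b (replicate (count m b) b)"
      using b ab unfolding goes_through_def by auto
    ultimately show "\<exists>C. longest_b_chain_in P b C m \<and> goes_through a b C" by blast
  qed
  ultimately have "n + {#a#} \<in> max_ideal_pow P d"
    using stable ab(1) split unfolding P_stable_def by blast
  then show False using \<open>2 \<le> d\<close> unfolding n_def max_ideal_pow_def by auto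
qed

lemma up_linear_imp_P_stable_max_ideal_pow:
  fixes P :: "'a::order set"
  assumes lin: "up_linear P"
  shows "P_stable P (max_ideal_pow P d)"
  unfolding P_stable_def
proof (intro allI impI, elim conjE)
  fix m n B a
  assume m: "m \<in> max_ideal_pow P d" and n: "monomial_on P n" and B: "antichain_on P B"
    and split: "m = n + mset_set B" and a: "a \<in> P"
    and chains: "\<forall>b\<in>B. \<exists>C. longest_b_chain_in P b C m \<and> goes_through a b C"
  have "a \<le> b" if "b \<in> B" for b
    using chains that unfolding goes_through_def by blast
  then have "\<forall>x\<in>B. \<forall>y\<in>B. x = y"
    using lin a B unfolding up_linear_def antichain_on_def by (metis subsetD)
  then have "size (mset_set B) \<le> 1"
    by (cases "finite B") (auto simp: card_le_Suc0_iff_eq)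
  then have "d \<le> size (n + {#a#})"
    using m split unfolding max_ideal_pow_def by auto
  then show "n + {#a#} \<in> max_ideal_pow P d"
    using n a unfolding max_ideal_pow_def monomial_on_def by auto
qed

theorem proposition3p16:
  fixes P :: "'a::order set" and d :: nat
  assumes "finite P" and "d \<ge> 2"
  shows "P_stable P (max_ideal_pow P d) \<longleftrightarrow> disjoint_union_rooted_trees P"
proof -
  have "P_stable P (max_ideal_pow P d) \<longleftrightarrow> up_linear P"
    using P_stable_max_ideal_pow_imp_up_linear[OF _ assms(2)] up_linear_imp_P_stable_max_ideal_pow
    by blast
  also have "\<dots> \<longleftrightarrow> disjoint_union_rooted_trees P"
    using up_linear_imp_forest[OF assms(1)] forest_imp_up_linear[OF assms(1)] by blast
  finally show ?thesis .
qed

end
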